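(* For every weak composition $a$ of length $n$, \[\mathfrak{Q}_a=\sum_{\substack{b\ge a\\ \mathrm{flat}(b)=\mathrm{flat}(a)}}\mathfrak{Q}^{(1)}_b,\] where $b$ ranges over weak compositions of length $n$.
   Context: Weak composition of length $n$: sequence of $n$ nonnegative integers; $\mathrm{flat}(a)$ deletes zero parts; $b\ge a$ means $b_1+\cdots+b_i\ge a_1+\cdots+a_i$ for all $i$. $D(a)$: $a_i$ left-justified boxes in row $i$, row 1 lowest. Quasi-key tableau of shape $a$: filling of $D(a)$ with positive integers such that (1) entries weakly decrease along rows and no entry of row $i$ exceeds $i$; (2) column entries distinct and increasing going up the first column; (3) if an entry $i$ is above an entry $k$ in the same column with $i<k$, there is an entry $j$ immediately right of $k$ with $i<j$; (4) for two rows with the higher strictly longer, an entry $i$ in column $c$ of the lower row and $j$ in column $c+1$ of the higher row satisfy $i<j$. $\mathfrak{Q}_a=\sum_T\prod_ix_i^{\#\{\text{entries } i \text{ in } T\}}$ over quasi-key tableaux of shape $a$; $\mathfrak{Q}^{(1)}_a$ is the same sum restricted to quasi-key tableaux whose first-column entries equal their row indices. *)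

theory Defs
  imports Main
begin

text \<open>A weak composition of length n is a list a of naturals with length a = n.
  Rows are indexed 1..n (row 1 lowest); row r has a!(r-1) boxes in columns 1..a!(r-1).\<close>

definition row_len :: "nat list \<Rightarrow> nat \<Rightarrow> nat" where
  "row_len a r = (if 1 \<le> r \<and> r \<le> length a then a ! (r - 1) else 0)"

definition diagram :: "nat list \<Rightarrow> (nat \<times> nat) set" where
  "diagram a = {(r, c). 1 \<le> r \<and> r \<le> length a \<and> 1 \<le> c \<and> c \<le> row_len a r}"

definition flat :: "nat list \<Rightarrow> nat list" where
  "flat a = filter (\<lambda>x. x \<noteq> 0) a"

definition dominates :: "nat list \<Rightarrow> nat list \<Rightarrow> bool" where
  "dominates b a \<longleftrightarrow> (\<forall>i \<le> length a. sum_list (take i a) \<le> sum_list (take i b))"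

definition quasi_key :: "nat list \<Rightarrow> (nat \<Rightarrow> nat \<Rightarrow> nat) \<Rightarrow> bool" where
  "quasi_key a T \<longleftrightarrow>
     (\<forall>r c. (r, c) \<notin> diagram a \<longrightarrow> T r c = 0) \<and>
     (\<forall>(r, c) \<in> diagram a. 0 < T r c) \<and>
     \<comment> \<open>(1) rows weakly decrease, entries of row r at most r\<close>
     (\<forall>r c c'. (r, c) \<in> diagram a \<and> (r, c') \<in> diagram a \<and> c < c' \<longrightarrow> T r c' \<le> T r c) \<and>
     (\<forall>(r, c) \<in> diagram a. T r c \<le> r) \<and>
     \<comment> \<open>(2) column entries distinct, first column increasing upwards\<close>
     (\<forall>r r' c. (r, c) \<in> diagram a \<and> (r', c) \<in> diagram a \<and> r \<noteq> r' \<longrightarrow> T r c \<noteq> T r' c) \<and>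
     (\<forall>r r'. (r, 1) \<in> diagram a \<and> (r', 1) \<in> diagram a \<and> r < r' \<longrightarrow> T r 1 < T r' 1) \<and>
     \<comment> \<open>(3) entry i at (r',c) above entry k at (r,c) with i < k: entry j right of k with i < j\<close>
     (\<forall>r r' c. (r, c) \<in> diagram a \<and> (r', c) \<in> diagram a \<and> r < r' \<and> T r' c < T r c \<longrightarrow>
        (r, c + 1) \<in> diagram a \<and> T r' c < T r (c + 1)) \<and>
     \<comment> \<open>(4) higher row strictly longer: entry at (r,c) less than entry at (r',c+1)\<close>
     (\<forall>r r' c. r < r' \<and> row_len a r < row_len a r' \<and> (r, c) \<in> diagram a \<and> (r', c + 1) \<in> diagram a \<longrightarrow>
        T r c < T r' (c + 1))"

definition QKT :: "nat list \<Rightarrow> (nat \<Rightarrow> nat \<Rightarrow> nat) set" where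
  "QKT a = {T. quasi_key a T}"

definition QKT1 :: "nat list \<Rightarrow> (nat \<Rightarrow> nat \<Rightarrow> nat) set" where
  "QKT1 a = {T. quasi_key a T \<and> (\<forall>r. (r, 1) \<in> diagram a \<longrightarrow> T r 1 = r)}"

definition tab_weight :: "nat list \<Rightarrow> (nat \<Rightarrow> 'a::comm_semiring_1) \<Rightarrow> (nat \<Rightarrow> nat \<Rightarrow> nat) \<Rightarrow> 'a" where
  "tab_weight a x T = (\<Prod>i\<in>{1..length a}. x i ^ card {(r, c) \<in> diagram a. T r c = i})"

text \<open>Polynomials are represented by evaluation at an arbitrary point x in an arbitrary
  commutative semiring (equality for all such x is equality of polynomials).\<close>
definition Qpoly :: "nat list \<Rightarrow> (nat \<Rightarrow> 'a::comm_semiring_1) \<Rightarrow> 'a" where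
  "Qpoly a x = (\<Sum>T\<in>QKT a. tab_weight a x T)"

definition Qpoly1 :: "nat list \<Rightarrow> (nat \<Rightarrow> 'a::comm_semiring_1) \<Rightarrow> 'a" where
  "Qpoly1 a x = (\<Sum>T\<in>QKT1 a. tab_weight a x T)"

end

(* Deleting the empty rows of D(a) turns a quasi-key tableau of shape a into a filling F of
   D(flat a) satisfying the same conditions, except that the bound "entries of row r are at
   most r" becomes F k c <= r_k, where r_k is the row of a holding its k-th nonzero part;
   conditions (2)-(4) survive since they compare rows only by their order and lengths.
   Rows weakly decrease, so the bound only matters in the first column, which is strictly
   increasing.  Hence the first column lists the rows r'_k of the nonzero parts of a unique
   weak composition b with flat b = flat a, F is one of the tableaux counted by Q^(1)_b, and
   the bound r'_k <= r_k says exactly that b dominates a.  Grouping the fillings F by b gives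
   the identity. *)

theory Submission
  imports Defs
begin

section \<open>Positions of the nonzero parts\<close>

definition nonzero_positions :: "nat list \<Rightarrow> nat list" where
  "nonzero_positions a = filter (\<lambda>i. a ! i \<noteq> 0) [0..<length a]"

lemma sorted_wrt_nonzero_positions: "sorted_wrt (<) (nonzero_positions a)"
  unfolding nonzero_positions_def by (rule sorted_wrt_filter) simp

lemma set_nonzero_positions: "set (nonzero_positions a) = {i. i < length a \<and> a ! i \<noteq> 0}"
  unfolding nonzero_positions_def by auto

lemma map_nth_nonzero_positions: "map ((!) a) (nonzero_positions a) = flat a"
proof -
  have "map ((!) a) (nonzero_positions a) = filter (\<lambda>x. x \<noteq> 0) (map ((!) a) [0..<length a])"
    unfolding nonzero_positions_def by (simp add: filter_map comp_def)
  also have "map ((!) a) [0..<length a] = a" by (rule map_nth)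
  finally show ?thesis by (simp add: flat_def)
qed

lemma length_nonzero_positions: "length (nonzero_positions a) = length (flat a)"
  by (metis length_map map_nth_nonzero_positions)

lemma nth_flat: "k < length (flat a) \<Longrightarrow> flat a ! k = a ! (nonzero_positions a ! k)"
  by (metis length_nonzero_positions map_nth_nonzero_positions nth_map)

lemma nonzero_positions_less_length: "k < length (flat a) \<Longrightarrow> nonzero_positions a ! k < length a"
  using set_nonzero_positions[of a] length_nonzero_positions[of a] nth_mem by fastforce

lemma nonzero_positions_less_iff:
  assumes "k < length (flat a)" "k' < length (flat a)"
  shows "nonzero_positions a ! k < nonzero_positions a ! k' \<longleftrightarrow> k < k'"
  using assms sorted_wrt_nth_less[OF sorted_wrt_nonzero_positions]
  by (metis length_nonzero_positions linorder_neq_iff order.asym)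

lemma zero_notin_flat: "0 \<notin> set (flat a)"
  by (simp add: flat_def)

section \<open>Deleting the empty rows of a diagram\<close>

definition flat_diagram :: "nat list \<Rightarrow> (nat \<times> nat) set" where
  "flat_diagram v = {(k, c). k < length v \<and> 1 \<le> c \<and> c \<le> v ! k}"

lemma first_column_in_flat_diagram:
  "0 \<notin> set v \<Longrightarrow> (k, 1) \<in> flat_diagram v \<longleftrightarrow> k < length v"
  unfolding flat_diagram_def by (auto simp: Suc_le_eq) (metis gr_zeroI nth_mem)

lemma finite_flat_diagram: "finite (flat_diagram v)"
proof (rule finite_subset)
  show "flat_diagram v \<subseteq> {..<length v} \<times> {..sum_list v}"
    using elem_le_sum_list[of _ v] by (auto simp: flat_diagram_def intro: order.trans)
qed simp

(* Rows of diagram a are numbered from 1, those of flat_diagram from 0. *)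
definition row_of :: "nat list \<Rightarrow> nat \<Rightarrow> nat" where
  "row_of a k = nonzero_positions a ! k + 1"

lemma row_of_less_iff:
  "k < length (flat a) \<Longrightarrow> k' < length (flat a) \<Longrightarrow> row_of a k < row_of a k' \<longleftrightarrow> k < k'"
  by (simp add: row_of_def nonzero_positions_less_iff)

lemma row_of_eq_iff:
  "k < length (flat a) \<Longrightarrow> k' < length (flat a) \<Longrightarrow> row_of a k = row_of a k' \<longleftrightarrow> k = k'"
  using row_of_less_iff by (metis linorder_neq_iff)

lemma row_of_le_length: "k < length (flat a) \<Longrightarrow> row_of a k \<le> length a"
  using nonzero_positions_less_length by (simp add: row_of_def Suc_le_eq)

lemma row_len_row_of: "k < length (flat a) \<Longrightarrow> row_len a (row_of a k) = flat a ! k"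
  using nonzero_positions_less_length[of k a] nth_flat[of k a] by (simp add: row_len_def row_of_def)

lemma diagram_eq_image: "diagram a = (\<lambda>(k, c). (row_of a k, c)) ` flat_diagram (flat a)"
proof (intro equalityI subsetI)
  fix x assume "x \<in> diagram a"
  then obtain r c where x: "x = (r, c)" "1 \<le> r" "r \<le> length a" "1 \<le> c" "c \<le> a ! (r - 1)"
    by (auto simp: diagram_def row_len_def split: prod.splits)
  then have "r - 1 \<in> set (nonzero_positions a)" by (auto simp: set_nonzero_positions)
  then obtain k where "k < length (flat a)" "nonzero_positions a ! k = r - 1"
    by (auto simp: in_set_conv_nth length_nonzero_positions)
  with x show "x \<in> (\<lambda>(k, c). (row_of a k, c)) ` flat_diagram (flat a)"
    by (intro image_eqI[of _ _ "(k, c)"]) (auto simp: flat_diagram_def row_of_def nth_flat)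
next
  fix x assume "x \<in> (\<lambda>(k, c). (row_of a k, c)) ` flat_diagram (flat a)"
  then obtain k c where "x = (row_of a k, c)" "k < length (flat a)" "1 \<le> c" "c \<le> flat a ! k"
    by (auto simp: flat_diagram_def)
  then show "x \<in> diagram a"
    using nonzero_positions_less_length[of k a] row_len_row_of[of k a]
    by (simp add: diagram_def row_of_def)
qed

lemma row_of_in_diagram_iff:
  "k < length (flat a) \<Longrightarrow> (row_of a k, c) \<in> diagram a \<longleftrightarrow> (k, c) \<in> flat_diagram (flat a)"
  unfolding diagram_eq_image by (auto simp: flat_diagram_def row_of_eq_iff)

lemma all_in_diagram_iff:
  "(\<forall>r c. (r, c) \<in> diagram a \<longrightarrow> P r c) \<longleftrightarrow> (\<forall>k c. (k, c) \<in> flat_diagram (flat a) \<longrightarrow> P (row_of a k) c)"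
  unfolding diagram_eq_image by (auto simp: image_iff) (metis case_prod_conv)

definition vanishes_outside :: "(nat \<times> nat) set \<Rightarrow> (nat \<Rightarrow> nat \<Rightarrow> nat) \<Rightarrow> bool" where
  "vanishes_outside D T \<longleftrightarrow> (\<forall>r c. (r, c) \<notin> D \<longrightarrow> T r c = 0)"

definition compress :: "nat list \<Rightarrow> (nat \<Rightarrow> nat \<Rightarrow> nat) \<Rightarrow> nat \<Rightarrow> nat \<Rightarrow> nat" where
  "compress a T k c = (if (k, c) \<in> flat_diagram (flat a) then T (row_of a k) c else 0)"

lemma vanishes_outside_compress: "vanishes_outside (flat_diagram (flat a)) (compress a T)"
  by (simp add: vanishes_outside_def compress_def)

lemma bij_betw_compress:
  "bij_betw (compress a) {T. vanishes_outside (diagram a) T}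
     {F. vanishes_outside (flat_diagram (flat a)) F}"
proof (rule bij_betw_imageI)
  show "inj_on (compress a) {T. vanishes_outside (diagram a) T}"
  proof (rule inj_onI, rule ext, rule ext)
    fix T T' r c
    assume T: "T \<in> {T. vanishes_outside (diagram a) T}" and T': "T' \<in> {T. vanishes_outside (diagram a) T}"
      and eq: "compress a T = compress a T'"
    show "T r c = T' r c"
    proof (cases "(r, c) \<in> diagram a")
      case True
      then obtain k where "(k, c) \<in> flat_diagram (flat a)" "r = row_of a k"
        unfolding diagram_eq_image by auto
      with fun_cong[OF fun_cong[OF eq, of k], of c] show ?thesis by (simp add: compress_def)
    next
      case False
      with T T' show ?thesis by (simp add: vanishes_outside_def)
    qed
  qed
next
  show "compress a ` {T. vanishes_outside (diagram a) T} = {F. vanishes_outside (flat_diagram (flat a)) F}"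
  proof (intro equalityI subsetI)
    fix F assume F: "F \<in> {F. vanishes_outside (flat_diagram (flat a)) F}"
    define row_index where "row_index r = (THE k. k < length (flat a) \<and> row_of a k = r)" for r
    have row_index: "k < length (flat a) \<Longrightarrow> row_index (row_of a k) = k" for k
      unfolding row_index_def by (rule the_equality) (auto simp: row_of_eq_iff)
    define T where "T r c = (if (r, c) \<in> diagram a then F (row_index r) c else 0)" for r c
    have "compress a T = F"
      using F row_index row_of_in_diagram_iff
      by (intro ext) (auto simp: compress_def T_def vanishes_outside_def flat_diagram_def)
    moreover have "vanishes_outside (diagram a) T" by (simp add: vanishes_outside_def T_def)
    ultimately show "F \<in> compress a ` {T. vanishes_outside (diagram a) T}" by blast
  qed (auto simp: vanishes_outside_def compress_def)
qed

definition flat_weight :: "nat \<Rightarrow> nat list \<Rightarrow> (nat \<Rightarrow> 'a::comm_semiring_1) \<Rightarrow> (nat \<Rightarrow> nat \<Rightarrow> nat) \<Rightarrow> 'a" where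
  "flat_weight n v x F = (\<Prod>i\<in>{1..n}. x i ^ card {(k, c) \<in> flat_diagram v. F k c = i})"

lemma tab_weight_compress: "tab_weight a x T = flat_weight (length a) (flat a) x (compress a T)"
proof -
  let ?\<rho> = "\<lambda>(k, c). (row_of a k, c)" and ?D = "flat_diagram (flat a)"
  have inj: "inj_on ?\<rho> ?D"
    by (rule inj_onI) (auto simp: flat_diagram_def row_of_eq_iff)
  have "card {(r, c) \<in> diagram a. T r c = i} = card {(k, c) \<in> ?D. compress a T k c = i}" for i
  proof -
    have "{(r, c) \<in> diagram a. T r c = i} = ?\<rho> ` {(k, c) \<in> ?D. compress a T k c = i}"
      unfolding diagram_eq_image by (auto simp: compress_def)
    also have "card \<dots> = card {(k, c) \<in> ?D. compress a T k c = i}"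
      by (rule card_image, rule inj_on_subset[OF inj]) auto
    finally show ?thesis .
  qed
  then show ?thesis by (simp add: tab_weight_def flat_weight_def)
qed

lemma sum_tab_weight_compress:
  assumes "S \<subseteq> {F. vanishes_outside (flat_diagram (flat a)) F}"
  shows "(\<Sum>T\<in>{T. vanishes_outside (diagram a) T \<and> compress a T \<in> S}. tab_weight a x T) =
    (\<Sum>F\<in>S. flat_weight (length a) (flat a) x F)"
proof -
  have "bij_betw (compress a) {T. vanishes_outside (diagram a) T \<and> compress a T \<in> S} S"
  proof (rule bij_betw_subset[OF bij_betw_compress])
    show "compress a ` {T. vanishes_outside (diagram a) T \<and> compress a T \<in> S} = S"
      using bij_betw_imp_surj_on[OF bij_betw_compress[of a]] assms by (auto simp: image_iff)
  qed auto
  then show ?thesis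
    by (simp add: tab_weight_compress sum.reindex_bij_betw[symmetric])
qed

section \<open>Quasi-key conditions on the compressed diagram\<close>

(* Everything in quasi_key except the bound T r c <= r, the only condition that depends on the
   row numbers themselves rather than on their order. *)
definition quasi_key_rules :: "(nat \<times> nat) set \<Rightarrow> (nat \<Rightarrow> nat) \<Rightarrow> (nat \<Rightarrow> nat \<Rightarrow> nat) \<Rightarrow> bool" where
  "quasi_key_rules D len T \<longleftrightarrow>
     (\<forall>(r, c) \<in> D. 0 < T r c) \<and>
     (\<forall>r c c'. (r, c) \<in> D \<and> (r, c') \<in> D \<and> c < c' \<longrightarrow> T r c' \<le> T r c) \<and>
     (\<forall>r r' c. (r, c) \<in> D \<and> (r', c) \<in> D \<and> r \<noteq> r' \<longrightarrow> T r c \<noteq> T r' c) \<and>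
     (\<forall>r r'. (r, 1) \<in> D \<and> (r', 1) \<in> D \<and> r < r' \<longrightarrow> T r 1 < T r' 1) \<and>
     (\<forall>r r' c. (r, c) \<in> D \<and> (r', c) \<in> D \<and> r < r' \<and> T r' c < T r c \<longrightarrow>
        (r, c + 1) \<in> D \<and> T r' c < T r (c + 1)) \<and>
     (\<forall>r r' c. r < r' \<and> len r < len r' \<and> (r, c) \<in> D \<and> (r', c + 1) \<in> D \<longrightarrow>
        T r c < T r' (c + 1))"

(* With every cell quantified over D, the conditions transfer along the row relabelling of
   diagram_eq_image by rewriting with all_in_diagram_iff. *)
lemma quasi_key_rules_nested:
  "quasi_key_rules D len T \<longleftrightarrow>
     (\<forall>r c. (r, c) \<in> D \<longrightarrow> 0 < T r c \<and>
       (\<forall>r' c'. (r', c') \<in> D \<longrightarrow>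
          (r = r' \<and> c < c' \<longrightarrow> T r c' \<le> T r c) \<and>
          (c = c' \<and> r \<noteq> r' \<longrightarrow> T r c \<noteq> T r' c) \<and>
          (c = 1 \<and> c' = 1 \<and> r < r' \<longrightarrow> T r 1 < T r' 1) \<and>
          (c = c' \<and> r < r' \<and> T r' c < T r c \<longrightarrow> (r, c + 1) \<in> D \<and> T r' c < T r (c + 1)) \<and>
          (c' = c + 1 \<and> r < r' \<and> len r < len r' \<longrightarrow> T r c < T r' c')))"
  unfolding quasi_key_rules_def
  by (rule iffI; (elim conjE)?; intro conjI allI impI ballI; blast)

lemma quasi_key_rules_pos:
  "quasi_key_rules D len T \<Longrightarrow> (r, c) \<in> D \<Longrightarrow> 0 < T r c"
  unfolding quasi_key_rules_def by fast

lemma quasi_key_rules_row_antimono: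
  "quasi_key_rules D len T \<Longrightarrow> (r, c) \<in> D \<Longrightarrow> (r, c') \<in> D \<Longrightarrow> c \<le> c' \<Longrightarrow> T r c' \<le> T r c"
  unfolding quasi_key_rules_def by (metis order_le_less order_refl)

lemma quasi_key_rules_first_column_less:
  "quasi_key_rules D len T \<Longrightarrow> (r, 1) \<in> D \<Longrightarrow> (r', 1) \<in> D \<Longrightarrow> r < r' \<Longrightarrow> T r 1 < T r' 1"
  unfolding quasi_key_rules_def by blast

lemma quasi_key_iff_rules:
  "quasi_key a T \<longleftrightarrow> vanishes_outside (diagram a) T \<and> quasi_key_rules (diagram a) (row_len a) T
     \<and> (\<forall>(r, c) \<in> diagram a. T r c \<le> r)"
  unfolding quasi_key_def vanishes_outside_def quasi_key_rules_def
  by (rule iffI; elim conjE; intro conjI; assumption)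

lemma quasi_key_rules_compress:
  "quasi_key_rules (diagram a) (row_len a) T \<longleftrightarrow>
     quasi_key_rules (flat_diagram (flat a)) ((!) (flat a)) (compress a T)"
  unfolding quasi_key_rules_nested all_in_diagram_iff
  by (simp add: compress_def flat_diagram_def row_of_less_iff row_of_eq_iff row_len_row_of
      row_of_in_diagram_iff cong: conj_cong)

definition flat_keys :: "nat list \<Rightarrow> (nat \<Rightarrow> nat \<Rightarrow> nat) set" where
  "flat_keys v = {F. vanishes_outside (flat_diagram v) F \<and> quasi_key_rules (flat_diagram v) ((!) v) F}"

lemma flat_keys_le_first_column:
  assumes "F \<in> flat_keys v" "(k, c) \<in> flat_diagram v"
  shows "F k c \<le> F k 1"
proof -
  have "(k, 1) \<in> flat_diagram v" "1 \<le> c" using assms(2) by (auto simp: flat_diagram_def)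
  with assms show ?thesis
    using quasi_key_rules_row_antimono[of "flat_diagram v" "(!) v" F k 1 c] by (simp add: flat_keys_def)
qed

lemma flat_keys_first_column_pos:
  "F \<in> flat_keys v \<Longrightarrow> 0 \<notin> set v \<Longrightarrow> k < length v \<Longrightarrow> 0 < F k 1"
  using quasi_key_rules_pos[of "flat_diagram v" "(!) v" F k 1] first_column_in_flat_diagram[of v k]
  by (simp add: flat_keys_def)

lemma flat_keys_first_column_less:
  "F \<in> flat_keys v \<Longrightarrow> 0 \<notin> set v \<Longrightarrow> k < k' \<Longrightarrow> k' < length v \<Longrightarrow> F k 1 < F k' 1"
  using quasi_key_rules_first_column_less[of "flat_diagram v" "(!) v" F k k']
    first_column_in_flat_diagram[of v k] first_column_in_flat_diagram[of v k']
  by (simp add: flat_keys_def)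

lemma flat_keys_bounded_iff:
  assumes "F \<in> flat_keys v" "0 \<notin> set v"
  shows "(\<forall>k c. (k, c) \<in> flat_diagram v \<longrightarrow> F k c \<le> \<beta> k) \<longleftrightarrow> (\<forall>k < length v. F k 1 \<le> \<beta> k)"
proof (intro iffI allI impI)
  fix k assume "\<forall>k c. (k, c) \<in> flat_diagram v \<longrightarrow> F k c \<le> \<beta> k" "k < length v"
  then show "F k 1 \<le> \<beta> k" using first_column_in_flat_diagram[OF assms(2)] by blast
next
  fix k c assume "\<forall>k < length v. F k 1 \<le> \<beta> k" "(k, c) \<in> flat_diagram v"
  then show "F k c \<le> \<beta> k"
    using flat_keys_le_first_column[OF assms(1)] by (fastforce simp: flat_diagram_def)
qed

lemma bounded_compress_iff:
  "(\<forall>(r, c) \<in> diagram a. T r c \<le> r) \<longleftrightarrow>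
     (\<forall>k c. (k, c) \<in> flat_diagram (flat a) \<longrightarrow> compress a T k c \<le> row_of a k)"
  using all_in_diagram_iff[of a "\<lambda>r c. T r c \<le> r"] by (auto simp: compress_def)

lemma first_column_compress_iff:
  "(\<forall>r. (r, 1) \<in> diagram a \<longrightarrow> T r 1 = r) \<longleftrightarrow>
     (\<forall>k < length (flat a). compress a T k 1 = row_of a k)"
  using all_in_diagram_iff[of a "\<lambda>r c. c = 1 \<longrightarrow> T r c = r"]
    first_column_in_flat_diagram[OF zero_notin_flat]
  by (auto simp: compress_def)

lemma quasi_key_iff_flat_keys:
  "quasi_key a T \<longleftrightarrow> vanishes_outside (diagram a) T \<and> compress a T \<in> flat_keys (flat a) \<and>
     (\<forall>k < length (flat a). compress a T k 1 \<le> row_of a k)"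
proof -
  have "quasi_key a T \<longleftrightarrow> vanishes_outside (diagram a) T \<and> compress a T \<in> flat_keys (flat a) \<and>
      (\<forall>k c. (k, c) \<in> flat_diagram (flat a) \<longrightarrow> compress a T k c \<le> row_of a k)"
    by (simp add: quasi_key_iff_rules quasi_key_rules_compress bounded_compress_iff flat_keys_def
        vanishes_outside_compress)
  then show ?thesis
    using flat_keys_bounded_iff[OF _ zero_notin_flat] by blast
qed

definition flat_QKT :: "nat list \<Rightarrow> (nat \<Rightarrow> nat \<Rightarrow> nat) set" where
  "flat_QKT a = {F \<in> flat_keys (flat a). \<forall>k < length (flat a). F k 1 \<le> row_of a k}"

definition flat_QKT1 :: "nat list \<Rightarrow> (nat \<Rightarrow> nat \<Rightarrow> nat) set" where
  "flat_QKT1 b = {F \<in> flat_keys (flat b). \<forall>k < length (flat b). F k 1 = row_of b k}"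

lemma Qpoly_flat_QKT: "Qpoly a x = (\<Sum>F\<in>flat_QKT a. flat_weight (length a) (flat a) x F)"
proof -
  have "QKT a = {T. vanishes_outside (diagram a) T \<and> compress a T \<in> flat_QKT a}"
    by (simp add: QKT_def flat_QKT_def quasi_key_iff_flat_keys)
  then show ?thesis
    unfolding Qpoly_def by (simp only:) (rule sum_tab_weight_compress, auto simp: flat_QKT_def flat_keys_def)
qed

lemma Qpoly1_flat_QKT1: "Qpoly1 b x = (\<Sum>F\<in>flat_QKT1 b. flat_weight (length b) (flat b) x F)"
proof -
  have "QKT1 b = {T. vanishes_outside (diagram b) T \<and> compress b T \<in> flat_QKT1 b}"
    unfolding QKT1_def flat_QKT1_def quasi_key_iff_flat_keys first_column_compress_iff by auto
  then show ?thesis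
    unfolding Qpoly1_def by (simp only:) (rule sum_tab_weight_compress, auto simp: flat_QKT1_def flat_keys_def)
qed

lemma flat_QKT_first_column_le:
  "F \<in> flat_QKT a \<Longrightarrow> k < length (flat a) \<Longrightarrow> F k 1 \<le> length a"
  using row_of_le_length[of k a] by (auto simp: flat_QKT_def)

lemma finite_bounded_fillings:
  assumes "finite D"
  shows "finite {F. vanishes_outside D F \<and> (\<forall>(k, c) \<in> D. F k c \<le> N)}"
proof -
  have "finite {f. \<forall>y. (y \<in> D \<longrightarrow> f y \<in> {..N}) \<and> (y \<notin> D \<longrightarrow> f y = 0)}"
    by (rule finite_set_of_finite_funs[OF assms]) simp
  then have "finite (curry ` {f. \<forall>y. (y \<in> D \<longrightarrow> f y \<in> {..N}) \<and> (y \<notin> D \<longrightarrow> f y = 0)})"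
    by (rule finite_imageI)
  moreover have "{F. vanishes_outside D F \<and> (\<forall>(k, c) \<in> D. F k c \<le> N)} \<subseteq>
      curry ` {f. \<forall>y. (y \<in> D \<longrightarrow> f y \<in> {..N}) \<and> (y \<notin> D \<longrightarrow> f y = 0)}"
    by (auto simp: vanishes_outside_def image_iff intro!: exI[of _ "case_prod _"])
  ultimately show ?thesis by (rule finite_subset[rotated])
qed

lemma finite_flat_QKT: "finite (flat_QKT a)"
proof (rule finite_subset)
  show "flat_QKT a \<subseteq> {F. vanishes_outside (flat_diagram (flat a)) F \<and>
      (\<forall>(k, c) \<in> flat_diagram (flat a). F k c \<le> length a)}"
  proof safe
    fix F k c assume F: "F \<in> flat_QKT a" and kc: "(k, c) \<in> flat_diagram (flat a)"
    have "F k c \<le> F k 1"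
      using F kc flat_keys_le_first_column by (auto simp: flat_QKT_def)
    also have "\<dots> \<le> length a"
      using F kc flat_QKT_first_column_le by (auto simp: flat_diagram_def)
    finally show "F k c \<le> length a" .
  qed (simp add: flat_QKT_def flat_keys_def)
qed (rule finite_bounded_fillings[OF finite_flat_diagram])

section \<open>Dominance as a comparison of row positions\<close>

lemma filter_take_prefix:
  "filter P (take i xs) = take (length (filter P (take i xs))) (filter P xs)"
proof -
  have "filter P xs = filter P (take i xs) @ filter P (drop i xs)"
    by (simp flip: filter_append)
  then show ?thesis by simp
qed

lemma nonzero_positions_take: "nonzero_positions (take i a) = filter (\<lambda>j. j < i) (nonzero_positions a)"
proof (rule sorted_distinct_set_unique)
  show "sorted (nonzero_positions (take i a))" "distinct (nonzero_positions (take i a))"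
    using sorted_wrt_nonzero_positions strict_sorted_iff by blast+
  show "sorted (filter (\<lambda>j. j < i) (nonzero_positions a))" "distinct (filter (\<lambda>j. j < i) (nonzero_positions a))"
    using sorted_wrt_filter[OF sorted_wrt_nonzero_positions] strict_sorted_iff by blast+
qed (auto simp: set_nonzero_positions)

lemma sum_list_flat: "sum_list (flat a) = sum_list a"
  unfolding flat_def by (induction a) auto

lemma sum_list_take_eq_flat:
  "sum_list (take i a) = sum_list (take (length (filter (\<lambda>j. j < i) (nonzero_positions a))) (flat a))"
proof -
  have "sum_list (take i a) = sum_list (flat (take i a))"
    by (rule sum_list_flat[symmetric])
  also have "flat (take i a) = take (length (flat (take i a))) (flat a)"
    unfolding flat_def by (rule filter_take_prefix)
  also have "length (flat (take i a)) = length (filter (\<lambda>j. j < i) (nonzero_positions a))"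
    by (simp flip: length_nonzero_positions add: nonzero_positions_take)
  finally show ?thesis .
qed

lemma sum_list_take_le_iff:
  fixes v :: "nat list"
  assumes "0 \<notin> set v" "j \<le> length v"
  shows "sum_list (take j v) \<le> sum_list (take j' v) \<longleftrightarrow> j \<le> j'"
proof
  assume "j \<le> j'"
  then show "sum_list (take j v) \<le> sum_list (take j' v)"
    by (metis le_add1 le_add_diff_inverse sum_list_append take_add)
next
  assume le: "sum_list (take j v) \<le> sum_list (take j' v)"
  show "j \<le> j'"
  proof (rule ccontr)
    assume "\<not> j \<le> j'"
    then have split: "take j v = take j' v @ take (j - j') (drop j' v)" and "j' < length v"
      using assms(2) take_add[of j' "j - j'" v] by auto
    then have "take (j - j') (drop j' v) \<noteq> []" using \<open>\<not> j \<le> j'\<close> by simp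
    then have "hd (take (j - j') (drop j' v)) \<in> set v"
      by (meson hd_in_set in_set_dropD in_set_takeD)
    then have "0 < sum_list (take (j - j') (drop j' v))"
      using assms(1) \<open>take (j - j') (drop j' v) \<noteq> []\<close> hd_in_set
      by (metis gr0I sum_list_eq_0_iff)
    moreover have "sum_list (take j v) = sum_list (take j' v) + sum_list (take (j - j') (drop j' v))"
      by (simp add: split)
    ultimately show False using le by linarith
  qed
qed

lemma sorted_count_less_le_iff:
  fixes p q :: "nat list"
  assumes p: "sorted_wrt (<) p" and q: "sorted_wrt (<) q" and len: "length q = length p"
    and bound: "\<forall>j\<in>set p. j < N"
  shows "(\<forall>i \<le> N. length (filter (\<lambda>j. j < i) p) \<le> length (filter (\<lambda>j. j < i) q)) \<longleftrightarrow>
    (\<forall>k < length p. q ! k \<le> p ! k)"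
proof -
  have count: "length (filter (\<lambda>j. j < i) xs) = card {k. k < length xs \<and> xs ! k < i}" for xs :: "nat list" and i
    by (simp add: length_filter_conv_card)
  have sorted: "sorted p" "sorted q" using p q strict_sorted_iff by blast+
  show ?thesis
  proof
    assume "\<forall>k < length p. q ! k \<le> p ! k"
    then have "{k. k < length p \<and> p ! k < i} \<subseteq> {k. k < length q \<and> q ! k < i}" for i
      using len by fastforce
    then show "\<forall>i \<le> N. length (filter (\<lambda>j. j < i) p) \<le> length (filter (\<lambda>j. j < i) q)"
      unfolding count by (simp add: card_mono)
  next
    assume counts: "\<forall>i \<le> N. length (filter (\<lambda>j. j < i) p) \<le> length (filter (\<lambda>j. j < i) q)"
    show "\<forall>k < length p. q ! k \<le> p ! k"
    proof (intro allI impI, rule ccontr)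
      fix k assume k: "k < length p" and "\<not> q ! k \<le> p ! k"
      define i where "i = p ! k + 1"
      have "i \<le> N" using bound k by (simp add: i_def Suc_le_eq)
      have "{..k} \<subseteq> {k'. k' < length p \<and> p ! k' < i}"
        using k sorted_nth_mono[OF sorted(1)] by (auto simp: i_def less_Suc_eq_le)
      then have "k + 1 \<le> length (filter (\<lambda>j. j < i) p)"
        unfolding count using card_mono[of _ "{..k}"] by fastforce
      moreover have "{k'. k' < length q \<and> q ! k' < i} \<subseteq> {..<k}"
      proof
        fix k' assume "k' \<in> {k'. k' < length q \<and> q ! k' < i}"
        then have "k' < length q" "q ! k' < q ! k" using \<open>\<not> q ! k \<le> p ! k\<close> by (auto simp: i_def)
        then show "k' \<in> {..<k}" using sorted_nth_mono[OF sorted(2), of k k'] by force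
      qed
      then have "length (filter (\<lambda>j. j < i) q) \<le> k"
        unfolding count using card_mono[of "{..<k}"] by fastforce
      ultimately show False using counts \<open>i \<le> N\<close> by fastforce
    qed
  qed
qed

(* Partial sums of a and b are partial sums of the common positive list flat a, so dominance
   compares the numbers of nonzero parts in each prefix; for strictly increasing position
   lists this is the pointwise comparison of positions. *)
lemma dominates_iff_row_of_le:
  assumes len: "length b = length a" and flat: "flat b = flat a"
  shows "dominates b a \<longleftrightarrow> (\<forall>k < length (flat a). row_of b k \<le> row_of a k)"
proof -
  let ?count = "\<lambda>c i. length (filter (\<lambda>j. j < i) (nonzero_positions c))"
  have count_le: "?count c i \<le> length (flat c)" for c i
    by (metis length_filter_le length_nonzero_positions)
  have "sum_list (take i a) \<le> sum_list (take i b) \<longleftrightarrow> ?count a i \<le> ?count b i" for i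
    unfolding sum_list_take_eq_flat[of i a] sum_list_take_eq_flat[of i b] flat
    by (rule sum_list_take_le_iff[OF zero_notin_flat count_le])
  then have "dominates b a \<longleftrightarrow> (\<forall>i \<le> length a. ?count a i \<le> ?count b i)"
    unfolding dominates_def by blast
  also have "\<dots> \<longleftrightarrow> (\<forall>k < length (nonzero_positions a). nonzero_positions b ! k \<le> nonzero_positions a ! k)"
    using sorted_wrt_nonzero_positions
    by (intro sorted_count_less_le_iff) (auto simp: length_nonzero_positions flat set_nonzero_positions)
  finally show ?thesis by (simp add: row_of_def length_nonzero_positions)
qed

section \<open>The shape read off the first column\<close>

definition place :: "nat \<Rightarrow> nat list \<Rightarrow> nat list \<Rightarrow> nat list" where
  "place n q v = map (\<lambda>i. case map_of (zip q v) i of None \<Rightarrow> 0 | Some y \<Rightarrow> y) [0..<n]"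

lemma length_place [simp]: "length (place n q v) = n"
  by (simp add: place_def)

lemma nth_place_in:
  assumes "distinct q" "length q = length v" "k < length q" "q ! k < n"
  shows "place n q v ! (q ! k) = v ! k"
  using assms by (simp add: place_def map_of_zip_nth)

lemma nth_place_notin:
  assumes "length q = length v" "i < n" "i \<notin> set q"
  shows "place n q v ! i = 0"
proof -
  have "map_of (zip q v) i = None" using assms by simp
  with assms(2) show ?thesis by (simp add: place_def)
qed

lemma nonzero_positions_place:
  assumes q: "sorted_wrt (<) q" and len: "length q = length v" and "0 \<notin> set v"
    and bound: "\<forall>i\<in>set q. i < n"
  shows "nonzero_positions (place n q v) = q"
proof (rule sorted_distinct_set_unique)
  show "sorted (nonzero_positions (place n q v))" "distinct (nonzero_positions (place n q v))"
    "sorted q" "distinct q"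
    using sorted_wrt_nonzero_positions q strict_sorted_iff by blast+
  have "place n q v ! i \<noteq> 0 \<longleftrightarrow> i \<in> set q" if "i < n" for i
  proof (cases "i \<in> set q")
    case True
    then obtain k where k: "k < length q" "i = q ! k" by (auto simp: in_set_conv_nth)
    then have "v ! k \<noteq> 0" using assms(3) len by (metis nth_mem)
    with k assms \<open>distinct q\<close> show ?thesis by (simp add: nth_place_in)
  qed (simp add: nth_place_notin len that)
  then show "set (nonzero_positions (place n q v)) = set q"
    using bound by (auto simp: set_nonzero_positions place_def)
qed

lemma flat_place:
  assumes "sorted_wrt (<) q" "length q = length v" "0 \<notin> set v" "\<forall>i\<in>set q. i < n"
  shows "flat (place n q v) = v"
proof -
  have "flat (place n q v) = map ((!) (place n q v)) q"
    by (simp flip: map_nth_nonzero_positions add: nonzero_positions_place[OF assms])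
  also have "\<dots> = v"
  proof (rule nth_equalityI)
    fix k assume "k < length (map ((!) (place n q v)) q)"
    moreover have "distinct q" using assms(1) strict_sorted_iff by blast
    ultimately show "map ((!) (place n q v)) q ! k = v ! k"
      using assms(2,4) by (simp add: nth_place_in)
  qed (simp add: assms(2))
  finally show ?thesis .
qed

lemma place_nonzero_positions: "place (length b) (nonzero_positions b) (flat b) = b"
proof (rule nth_equalityI)
  fix i assume i: "i < length (place (length b) (nonzero_positions b) (flat b))"
  show "place (length b) (nonzero_positions b) (flat b) ! i = b ! i"
  proof (cases "i \<in> set (nonzero_positions b)")
    case True
    then obtain k where "k < length (flat b)" "i = nonzero_positions b ! k"
      by (auto simp: in_set_conv_nth length_nonzero_positions)
    moreover have "distinct (nonzero_positions b)"
      using sorted_wrt_nonzero_positions strict_sorted_iff by blast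
    ultimately show ?thesis
      by (simp add: nth_place_in length_nonzero_positions nonzero_positions_less_length nth_flat)
  next
    case False
    then show ?thesis using i by (simp add: nth_place_notin length_nonzero_positions set_nonzero_positions)
  qed
qed simp

lemma finite_same_flat: "finite {b. length b = n \<and> flat b = v}"
proof (rule finite_subset)
  show "{b. length b = n \<and> flat b = v} \<subseteq> {b. set b \<subseteq> insert 0 (set v) \<and> length b = n}"
    by (auto simp: flat_def)
qed (simp add: finite_lists_length_eq)

(* The weak composition of length n with nonzero parts v whose k-th nonzero part is in
   row F k 1. *)
definition first_column_shape :: "nat \<Rightarrow> nat list \<Rightarrow> (nat \<Rightarrow> nat \<Rightarrow> nat) \<Rightarrow> nat list" where
  "first_column_shape n v F = place n (map (\<lambda>k. F k 1 - 1) [0..<length v]) v"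

lemma length_first_column_shape [simp]: "length (first_column_shape n v F) = n"
  by (simp add: first_column_shape_def)

lemma flat_row_of_first_column_shape:
  assumes F: "F \<in> flat_keys v" and v: "0 \<notin> set v" and bound: "\<forall>k < length v. F k 1 \<le> n"
  shows "flat (first_column_shape n v F) = v"
    "\<And>k. k < length v \<Longrightarrow> row_of (first_column_shape n v F) k = F k 1"
proof -
  let ?q = "map (\<lambda>k. F k 1 - 1) [0..<length v]"
  have pos: "k < length v \<Longrightarrow> 0 < F k 1" for k by (rule flat_keys_first_column_pos[OF F v])
  have "sorted_wrt (<) ?q"
  proof (unfold sorted_wrt_iff_nth_less, intro allI impI)
    fix i j assume "i < j" "j < length ?q"
    then have "0 < F i 1" "F i 1 < F j 1"
      using pos flat_keys_first_column_less[OF F v] by auto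
    with \<open>i < j\<close> \<open>j < length ?q\<close> show "?q ! i < ?q ! j" by simp
  qed
  moreover have "\<forall>i\<in>set ?q. i < n" using pos bound by fastforce
  ultimately have "nonzero_positions (first_column_shape n v F) = ?q" "flat (first_column_shape n v F) = v"
    unfolding first_column_shape_def using v by (simp_all add: nonzero_positions_place flat_place)
  then show "flat (first_column_shape n v F) = v"
    "\<And>k. k < length v \<Longrightarrow> row_of (first_column_shape n v F) k = F k 1"
    using pos by (auto simp: row_of_def)
qed

lemma first_column_shape_dominates:
  assumes "F \<in> flat_QKT a"
  shows "first_column_shape (length a) (flat a) F \<in>
    {b. length b = length a \<and> dominates b a \<and> flat b = flat a}"
proof -
  have F: "F \<in> flat_keys (flat a)" and le: "\<forall>k < length (flat a). F k 1 \<le> row_of a k"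
    using assms by (auto simp: flat_QKT_def)
  have "\<forall>k < length (flat a). F k 1 \<le> length a" using flat_QKT_first_column_le[OF assms] by blast
  note shape = flat_row_of_first_column_shape[OF F zero_notin_flat this]
  show ?thesis
    using le by (simp add: dominates_iff_row_of_le shape)
qed

lemma first_column_shape_fibre:
  assumes len: "length b = length a" and flat: "flat b = flat a" and dom: "dominates b a"
  shows "{F \<in> flat_QKT a. first_column_shape (length a) (flat a) F = b} = flat_QKT1 b"
proof (intro equalityI subsetI)
  fix F assume "F \<in> {F \<in> flat_QKT a. first_column_shape (length a) (flat a) F = b}"
  then have F: "F \<in> flat_QKT a" and b: "b = first_column_shape (length a) (flat a) F" by auto
  have "\<forall>k < length (flat a). F k 1 \<le> length a" using flat_QKT_first_column_le[OF F] by blast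
  then show "F \<in> flat_QKT1 b"
    using F b flat_row_of_first_column_shape[OF _ zero_notin_flat] flat
    by (auto simp: flat_QKT_def flat_QKT1_def)
next
  fix F assume "F \<in> flat_QKT1 b"
  then have "F \<in> flat_keys (flat a)" and col: "\<forall>k < length (flat a). F k 1 = row_of b k"
    using flat by (auto simp: flat_QKT1_def)
  then have "F \<in> flat_QKT a"
    using dom by (simp add: flat_QKT_def dominates_iff_row_of_le[OF len flat])
  moreover have "map (\<lambda>k. F k 1 - 1) [0..<length (flat a)] = nonzero_positions b"
    using col flat by (intro nth_equalityI) (simp_all add: length_nonzero_positions row_of_def)
  then have "first_column_shape (length a) (flat a) F = b"
    using place_nonzero_positions[of b] len flat by (simp add: first_column_shape_def)
  ultimately show "F \<in> {F \<in> flat_QKT a. first_column_shape (length a) (flat a) F = b}" by blast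
qed

theorem lemma2p20:
  fixes a :: "nat list" and x :: "nat \<Rightarrow> 'a::comm_semiring_1"
  shows "Qpoly a x =
    (\<Sum>b\<in>{b. length b = length a \<and> dominates b a \<and> flat b = flat a}. Qpoly1 b x)"
proof -
  let ?B = "{b. length b = length a \<and> dominates b a \<and> flat b = flat a}"
  let ?shape = "first_column_shape (length a) (flat a)"
  let ?w = "flat_weight (length a) (flat a) x"
  have "finite ?B" using finite_same_flat by (rule finite_subset[rotated]) blast
  have "Qpoly a x = (\<Sum>F\<in>flat_QKT a. ?w F)" by (rule Qpoly_flat_QKT)
  also have "\<dots> = (\<Sum>b\<in>?B. \<Sum>F\<in>{F \<in> flat_QKT a. ?shape F = b}. ?w F)"
    using first_column_shape_dominates
    by (intro sum.group[symmetric] finite_flat_QKT \<open>finite ?B\<close>) blast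
  also have "\<dots> = (\<Sum>b\<in>?B. Qpoly1 b x)"
    by (rule sum.cong) (simp_all add: first_column_shape_fibre Qpoly1_flat_QKT1)
  finally show ?thesis .
qed

end
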